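(* Let $1=v_1\ge v_2\ge v_3\ge v_4>0$ and, for $i\in\{1,2,3,4\}$ and $j\in\{A,B,C\}$, let $T_{ij}$ be the probability that $a_i$ wins the knockout tournament of type $j$. Consider the equations $$\frac{4T_{1A}-2T_{1B}-2T_{1C}}{5T_{1A}-T_{1B}-4T_{1C}}=\frac{4T_{2A}-2T_{2B}-2T_{2C}}{5T_{2A}-T_{2B}-4T_{2C}},\qquad \frac{4T_{3A}-2T_{3C}-2T_{3B}}{5T_{3A}-T_{3B}-4T_{3C}}=\frac{4T_{4A}-2T_{4C}-2T_{4B}}{5T_{4A}-T_{4B}-4T_{4C}}.$$ The only solutions of these equations are the weight vectors with $v_1=v_2=1$ and $v_3=v_4\le 1$.
   Context: Four teams $a_1,\dots,a_4$ with weights $v_1,\dots,v_4$. In any game between $a_i$ and $a_j$, $a_i$ wins with probability $v_i/(v_i+v_j)$, independently. A knockout tournament consists of two first-round games whose winners meet in a final. Tournament $A$: first round $a_1$ vs $a_4$ and $a_2$ vs $a_3$. Tournament $B$: $a_1$ vs $a_3$ and $a_2$ vs $a_4$. Tournament $C$: $a_1$ vs $a_2$ and $a_3$ vs $a_4$. *)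

theory Defs
  imports Complex_Main
begin

definition beat :: "(nat \<Rightarrow> real) \<Rightarrow> nat \<Rightarrow> nat \<Rightarrow> real" where
  "beat v i j = v i / (v i + v j)"

text \<open>Knockout tournament with first-round games a vs b and c vs d, whose winners meet
  in the final. win_prob v (a,b) (c,d) i is the probability that team i wins it
  (for i one of a,b,c,d).\<close>

definition win_prob :: "(nat \<Rightarrow> real) \<Rightarrow> nat \<times> nat \<Rightarrow> nat \<times> nat \<Rightarrow> nat \<Rightarrow> real" where
  "win_prob v g1 g2 i =
     (let (a, b) = g1; (c, d) = g2 in
      if i = a then beat v a b * (beat v c d * beat v a c + beat v d c * beat v a d)
      else if i = b then beat v b a * (beat v c d * beat v b c + beat v d c * beat v b d)
      else if i = c then beat v c d * (beat v a b * beat v c a + beat v b a * beat v c b)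
      else if i = d then beat v d c * (beat v a b * beat v d a + beat v b a * beat v d b)
      else 0)"

definition TA :: "(nat \<Rightarrow> real) \<Rightarrow> nat \<Rightarrow> real" where
  "TA v i = win_prob v (1, 4) (2, 3) i"

definition TB :: "(nat \<Rightarrow> real) \<Rightarrow> nat \<Rightarrow> real" where
  "TB v i = win_prob v (1, 3) (2, 4) i"

definition TC :: "(nat \<Rightarrow> real) \<Rightarrow> nat \<Rightarrow> real" where
  "TC v i = win_prob v (1, 2) (3, 4) i"

end

theory Submission
  imports Defs
begin

(* Multiplied by the product of all six pairwise weight sums, the probability that team i
   wins after meeting team j first is v_i^2 (s_i + 2 (v_k v_l)^2), where s_i is symmetric in
   the three opponents of i.  Both combinations in the hypotheses have coefficient sum zero,
   so s_i cancels and each side becomes a rational function of the squared weights of the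
   first-round opponents of i in A, B and C.  For the ordered weights, the first equation
   then forces v_3 = v_4, and the second, given v_3 = v_4, forces v_2 = 1. *)

definition champion_prob :: "real \<Rightarrow> real \<Rightarrow> real \<Rightarrow> real \<Rightarrow> real" where
  "champion_prob x y z w = x / (x + y) * (z / (z + w) * (x / (x + z)) + w / (z + w) * (x / (x + w)))"

definition pair_sum_prod :: "real \<Rightarrow> real \<Rightarrow> real \<Rightarrow> real \<Rightarrow> real" where
  "pair_sum_prod x y z w = (x + y) * (x + z) * (x + w) * (y + z) * (y + w) * (z + w)"

definition opponent_ratio :: "real \<Rightarrow> real \<Rightarrow> real \<Rightarrow> real" where
  "opponent_ratio p q r = (4 * q * r - 2 * p * r - 2 * p * q) / (5 * q * r - p * r - 4 * p * q)"

lemma win_prob_eq_champion_prob: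
  assumes "distinct [a, b, c, d]"
  shows "win_prob v (a, b) (c, d) a = champion_prob (v a) (v b) (v c) (v d)"
    and "win_prob v (a, b) (c, d) b = champion_prob (v b) (v a) (v c) (v d)"
    and "win_prob v (a, b) (c, d) c = champion_prob (v c) (v d) (v a) (v b)"
    and "win_prob v (a, b) (c, d) d = champion_prob (v d) (v c) (v a) (v b)"
  using assms by (simp_all add: win_prob_def champion_prob_def beat_def)

lemma champion_prob_commute: "champion_prob x y z w = champion_prob x y w z"
  by (simp add: champion_prob_def add.commute)

lemma pair_sum_prod_mult_champion_prob:
  fixes x y z w :: real
  assumes "0 < x" "0 < y" "0 < z" "0 < w"
  shows "pair_sum_prod x y z w * champion_prob x y z w
    = x\<^sup>2 * (x * (y + z + w) * (y * z + y * w + z * w) + (2 * (y + z + w) - x) * (y * z * w)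
        + 2 * (z * w)\<^sup>2)"
proof -
  have "x + y \<noteq> 0" "x + z \<noteq> 0" "x + w \<noteq> 0" "z + w \<noteq> 0"
    using assms by auto
  then show ?thesis
    unfolding pair_sum_prod_def champion_prob_def by (simp add: divide_simps) algebra
qed

lemma champion_prob_zero_sum_combination:
  fixes x y z w :: real
  assumes "0 < x" "0 < y" "0 < z" "0 < w" and "\<alpha> + \<beta> + \<gamma> = 0"
  shows "pair_sum_prod x y z w
      * (\<alpha> * champion_prob x y z w + \<beta> * champion_prob x z y w + \<gamma> * champion_prob x w y z)
    = 2 * x\<^sup>2 * (\<alpha> * (z * w)\<^sup>2 + \<beta> * (y * w)\<^sup>2 + \<gamma> * (y * z)\<^sup>2)"
proof -
  let ?L = "pair_sum_prod x y z w"
  define s where "s = x * (y + z + w) * (y * z + y * w + z * w) + (2 * (y + z + w) - x) * (y * z * w)"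
  have "pair_sum_prod x z y w = ?L" "pair_sum_prod x w y z = ?L"
    by (simp_all add: pair_sum_prod_def algebra_simps)
  then have "?L * champion_prob x y z w = x\<^sup>2 * (s + 2 * (z * w)\<^sup>2)"
    "?L * champion_prob x z y w = x\<^sup>2 * (s + 2 * (y * w)\<^sup>2)"
    "?L * champion_prob x w y z = x\<^sup>2 * (s + 2 * (y * z)\<^sup>2)"
    using pair_sum_prod_mult_champion_prob[OF assms(1-4)]
      pair_sum_prod_mult_champion_prob[OF assms(1,3,2,4)]
      pair_sum_prod_mult_champion_prob[OF assms(1,4,2,3)]
    by (simp_all add: s_def algebra_simps)
  then have "?L * (\<alpha> * champion_prob x y z w + \<beta> * champion_prob x z y w + \<gamma> * champion_prob x w y z)
      = (\<alpha> + \<beta> + \<gamma>) * x\<^sup>2 * s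
        + 2 * x\<^sup>2 * (\<alpha> * (z * w)\<^sup>2 + \<beta> * (y * w)\<^sup>2 + \<gamma> * (y * z)\<^sup>2)"
    by (simp add: algebra_simps)
  with assms(5) show ?thesis
    by simp
qed

lemma champion_prob_ratio:
  fixes x y z w :: real
  assumes "0 < x" "0 < y" "0 < z" "0 < w"
  shows "(4 * champion_prob x y z w - 2 * champion_prob x z y w - 2 * champion_prob x w y z)
       / (5 * champion_prob x y z w - champion_prob x z y w - 4 * champion_prob x w y z)
    = opponent_ratio (y\<^sup>2) (z\<^sup>2) (w\<^sup>2)"
    (is "(4 * ?P - 2 * ?Q - 2 * ?R) / (5 * ?P - ?Q - 4 * ?R) = _")
proof -
  let ?L = "pair_sum_prod x y z w"
  have "?L \<noteq> 0" "2 * x\<^sup>2 \<noteq> 0"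
    using assms by (simp_all add: pair_sum_prod_def)
  then have "(4 * ?P - 2 * ?Q - 2 * ?R) / (5 * ?P - ?Q - 4 * ?R)
      = (?L * (4 * ?P - 2 * ?Q - 2 * ?R)) / (?L * (5 * ?P - ?Q - 4 * ?R))"
    by simp
  also have "\<dots> = (2 * x\<^sup>2 * (4 * (z * w)\<^sup>2 - 2 * (y * w)\<^sup>2 - 2 * (y * z)\<^sup>2))
      / (2 * x\<^sup>2 * (5 * (z * w)\<^sup>2 - (y * w)\<^sup>2 - 4 * (y * z)\<^sup>2))"
    using champion_prob_zero_sum_combination[OF assms, of 4 "-2" "-2"]
      champion_prob_zero_sum_combination[OF assms, of 5 "-1" "-4"]
    by simp
  also have "\<dots> = opponent_ratio (y\<^sup>2) (z\<^sup>2) (w\<^sup>2)"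
    using \<open>2 * x\<^sup>2 \<noteq> 0\<close>
    by (subst mult_divide_mult_cancel_left) (simp_all add: opponent_ratio_def power_mult_distrib mult.assoc)
  finally show ?thesis .
qed

lemma opponent_ratio_eq_imp_eq:
  fixes x y z :: real
  assumes "0 < z" "z \<le> y" "y \<le> x" "x \<le> 1"
    and "opponent_ratio z y x = opponent_ratio y z 1"
  shows "y = z"
proof (rule ccontr)
  assume "y \<noteq> z"
  with assms have "z < y" "0 < y" "0 < x" by auto
  then have "0 < x * (y - z)" "0 \<le> y * (x - z)"
    using assms by simp_all
  then have "0 < 4 * y * x - 2 * z * x - 2 * z * y"
    and den_pos: "0 < 5 * y * x - z * x - 4 * z * y"
    by (simp_all add: algebra_simps)
  then have "5 * z - y - 4 * y * z \<noteq> 0"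
    using assms(5) by (auto simp: opponent_ratio_def)
  then have "(4 * y * x - 2 * z * x - 2 * z * y) * (5 * z - y - 4 * y * z)
      = (4 * z - 2 * y - 2 * y * z) * (5 * y * x - z * x - 4 * z * y)"
    using assms(5) den_pos by (simp add: opponent_ratio_def frac_eq_eq)
  then have "6 * (z - y) * (y * z + x * y * z - x * y - x * z) = 0"
    by algebra
  moreover have "z * (y - x) \<le> 0" "x * y * (z - 1) < 0"
    using assms \<open>z < y\<close> \<open>0 < x\<close> \<open>0 < y\<close> by (simp_all add: mult_nonneg_nonpos mult_pos_neg)
  then have "y * z + x * y * z - x * y - x * z < 0"
    by (simp add: algebra_simps)
  ultimately show False
    using \<open>z < y\<close> by simp
qed

lemma opponent_ratio_eq_imp_eq_one:
  fixes x y :: real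
  assumes "0 < y" "y \<le> x" "x \<le> 1"
    and "opponent_ratio x 1 y = opponent_ratio 1 x y"
  shows "x = 1"
proof (rule ccontr)
  assume "x \<noteq> 1"
  with assms have "x < 1" "0 < x" by auto
  then have "x * (y - 1) \<le> 0" "y * (x - 1) < 0"
    using assms by (simp_all add: mult_nonneg_nonpos mult_pos_neg)
  then have "4 * x * y - 2 * y - 2 * x < 0"
    and den_neg: "5 * x * y - y - 4 * x < 0"
    by (simp_all add: algebra_simps)
  then have "5 * y - x * y - 4 * x \<noteq> 0"
    using assms(4) by (auto simp: opponent_ratio_def)
  then have "(4 * y - 2 * x * y - 2 * x) * (5 * x * y - y - 4 * x)
      = (4 * x * y - 2 * y - 2 * x) * (5 * y - x * y - 4 * x)"
    using assms(4) den_neg by (simp add: opponent_ratio_def frac_eq_eq)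
  then have "6 * (1 - x) * y * (y * (1 + x) - 2 * x) = 0"
    by algebra
  moreover have "y * (1 + x) \<le> x * (1 + x)" "x * (1 + x) < 2 * x"
    using assms \<open>x < 1\<close> \<open>0 < x\<close> by (simp_all add: mult_right_mono)
  then have "y * (1 + x) - 2 * x < 0"
    by simp
  ultimately show False
    using \<open>x < 1\<close> assms(1) by simp
qed

theorem theorem9:
  fixes v :: "nat \<Rightarrow> real"
  assumes "v 1 = 1" and "v 1 \<ge> v 2" and "v 2 \<ge> v 3" and "v 3 \<ge> v 4" and "v 4 > 0"
    and eq1: "(4 * TA v 1 - 2 * TB v 1 - 2 * TC v 1) / (5 * TA v 1 - TB v 1 - 4 * TC v 1)
            = (4 * TA v 2 - 2 * TB v 2 - 2 * TC v 2) / (5 * TA v 2 - TB v 2 - 4 * TC v 2)"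
    and eq2: "(4 * TA v 3 - 2 * TC v 3 - 2 * TB v 3) / (5 * TA v 3 - TB v 3 - 4 * TC v 3)
            = (4 * TA v 4 - 2 * TC v 4 - 2 * TB v 4) / (5 * TA v 4 - TB v 4 - 4 * TC v 4)"
  shows "v 2 = 1 \<and> v 3 = v 4"
proof -
  have pos: "0 < v 1" "0 < v 2" "0 < v 3" "0 < v 4"
    using assms by linarith+
  note closed_form = TA_def TB_def TC_def win_prob_eq_champion_prob champion_prob_commute
  have ratio1: "(4 * TA v 1 - 2 * TB v 1 - 2 * TC v 1) / (5 * TA v 1 - TB v 1 - 4 * TC v 1)
      = opponent_ratio ((v 4)\<^sup>2) ((v 3)\<^sup>2) ((v 2)\<^sup>2)"
    using champion_prob_ratio[of "v 1" "v 4" "v 3" "v 2"] pos by (simp add: closed_form)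
  have ratio2: "(4 * TA v 2 - 2 * TB v 2 - 2 * TC v 2) / (5 * TA v 2 - TB v 2 - 4 * TC v 2)
      = opponent_ratio ((v 3)\<^sup>2) ((v 4)\<^sup>2) ((v 1)\<^sup>2)"
    using champion_prob_ratio[of "v 2" "v 3" "v 4" "v 1"] pos by (simp add: closed_form)
  have ratio3: "(4 * TA v 3 - 2 * TC v 3 - 2 * TB v 3) / (5 * TA v 3 - TB v 3 - 4 * TC v 3)
      = opponent_ratio ((v 2)\<^sup>2) ((v 1)\<^sup>2) ((v 4)\<^sup>2)"
    using champion_prob_ratio[of "v 3" "v 2" "v 1" "v 4"] pos by (simp add: closed_form diff_right_commute)
  have ratio4: "(4 * TA v 4 - 2 * TC v 4 - 2 * TB v 4) / (5 * TA v 4 - TB v 4 - 4 * TC v 4)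
      = opponent_ratio ((v 1)\<^sup>2) ((v 2)\<^sup>2) ((v 3)\<^sup>2)"
    using champion_prob_ratio[of "v 4" "v 1" "v 2" "v 3"] pos by (simp add: closed_form diff_right_commute)
  have squares_ordered: "(v 4)\<^sup>2 \<le> (v 3)\<^sup>2" "(v 3)\<^sup>2 \<le> (v 2)\<^sup>2" "(v 2)\<^sup>2 \<le> 1"
    using assms pos by (simp_all add: power_mono power_le_one)
  have "(v 3)\<^sup>2 = (v 4)\<^sup>2"
    using opponent_ratio_eq_imp_eq[OF _ squares_ordered] eq1 pos
    unfolding ratio1 ratio2 \<open>v 1 = 1\<close> by simp
  moreover have "(v 2)\<^sup>2 = 1"
    using opponent_ratio_eq_imp_eq_one[OF _ squares_ordered(2,3)] eq2 pos
    unfolding ratio3 ratio4 \<open>v 1 = 1\<close> \<open>(v 3)\<^sup>2 = (v 4)\<^sup>2\<close> by simp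
  ultimately show ?thesis
    using pos by (simp add: power2_eq_iff_nonneg power2_eq_1_iff)
qed

end
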